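(* Let $a,b,c,d$ be nonnegative integers and let $\kappa,\lambda\subseteq\Box_{a+c,b+d}$ be partitions with $\ell(\kappa)\le a$ and $\lambda_1\le b$. Work in the cohomology ring of $G(a+c,b+d)$. (1) If $|\kappa|+|\lambda|>ad+ab+cb$, then $\sigma_\kappa\cdot\sigma_\lambda=0$. (2) If $|\kappa|+|\lambda|=ad+ab+cb$ and $\sigma_\kappa\cdot\sigma_\lambda\neq0$, then $\sigma_\kappa\cdot\sigma_\lambda=\sigma_{\Box_{c,d}^\vee}$, where $\Box_{c,d}^\vee$ is the complement of $\Box_{c,d}$ in $\Box_{a+c,b+d}$ (the partition with $a$ parts equal to $b+d$ followed by $c$ parts equal to $b$), and there is a partition $\alpha\subseteq\Box_{a,b}$ such that $\kappa=\Box_{a,d}+\alpha$ and $\lambda=(\Box_{c,b},\alpha^\vee)$, where $\alpha^\vee$ is the complement of $\alpha$ in $\Box_{a,b}$.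
   Context: Partitions: weakly decreasing finite sequences of positive integers $\lambda_1\ge\dots\ge\lambda_k>0$, with $\lambda_i:=0$ for $i>k$, $\ell(\lambda)=k$, $|\lambda|=\sum\lambda_i$; $\lambda\subseteq\mu$ means $\lambda_i\le\mu_i$ for all $i$. $\Box_{a,b}$ is the partition with $a$ parts equal to $b$. $\mu+\nu$ has $k$-th part $\mu_k+\nu_k$; $(\mu,\nu)$ is the decreasing rearrangement of the concatenated parts of $\mu$ and $\nu$. For $\lambda\subseteq\Box_{a,b}$, its complement in $\Box_{a,b}$ is the partition $\lambda^\vee\subseteq\Box_{a,b}$ with $\lambda^\vee_i=b-\lambda_{a+1-i}$ for $i=1,\dots,a$. $G(a,b)$ is the Grassmannian of $a$-dimensional subspaces of $\mathbb{C}^{a+b}$. Its cohomology ring has $\mathbb{Z}$-basis the Schubert classes $\sigma_\lambda$, $\lambda\subseteq\Box_{a,b}$ (the class of the Schubert variety $\Omega_\lambda F_\bullet=\{H: \dim H\cap F_{b+i-\lambda_i}\ge i,\ i=1,\dots,a\}$ for a complete flag $F_\bullet$); the map from symmetric functions sending the Schur function $S_\lambda$ to $\sigma_\lambda$ if $\lambda\subseteq\Box_{a,b}$ and to $0$ otherwise is a surjective ring homomorphism, so products of Schubert classes are computed by Littlewood-Richardson coefficients, discarding partitions not contained in $\Box_{a,b}$. $\sigma_{\Box_{a,b}}$ is the class of a point. *)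

theory Defs
  imports Main
begin

text \<open>Partitions are represented as lists of positive naturals in weakly decreasing order.
  Parts are indexed from 0 here: part lam i is the (i+1)-st part, 0 beyond the length.\<close>

definition is_partition :: "nat list \<Rightarrow> bool" where
  "is_partition lam \<longleftrightarrow> sorted_wrt (\<ge>) lam \<and> (\<forall>x\<in>set lam. 0 < x)"

definition part :: "nat list \<Rightarrow> nat \<Rightarrow> nat" where
  "part lam i = (if i < length lam then lam ! i else 0)"

definition subpart :: "nat list \<Rightarrow> nat list \<Rightarrow> bool" where
  "subpart lam mu \<longleftrightarrow> (\<forall>i. part lam i \<le> part mu i)"

definition psize :: "nat list \<Rightarrow> nat" where
  "psize lam = sum_list lam"

definition box :: "nat \<Rightarrow> nat \<Rightarrow> nat list" where
  "box a b = filter (\<lambda>x. 0 < x) (replicate a b)"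

definition pcompl :: "nat \<Rightarrow> nat \<Rightarrow> nat list \<Rightarrow> nat list" where
  "pcompl a b lam = filter (\<lambda>x. 0 < x) (map (\<lambda>i. b - part lam (a - 1 - i)) [0..<a])"

definition padd :: "nat list \<Rightarrow> nat list \<Rightarrow> nat list" where
  "padd mu nu = map (\<lambda>i. part mu i + part nu i) [0..<max (length mu) (length nu)]"

definition pconcat :: "nat list \<Rightarrow> nat list \<Rightarrow> nat list" where
  "pconcat mu nu = rev (sort (mu @ nu))"

text \<open>Cells (row, column), 0-indexed, of the skew shape nu/kappa.\<close>
definition skew_cells :: "nat list \<Rightarrow> nat list \<Rightarrow> (nat \<times> nat) set" where
  "skew_cells nu kappa = {(i, j). part kappa i \<le> j \<and> j < part nu i}"

text \<open>Reading order: rows top to bottom, each row right to left.\<close>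
definition read_le :: "nat \<times> nat \<Rightarrow> nat \<times> nat \<Rightarrow> bool" where
  "read_le p q \<longleftrightarrow> fst p < fst q \<or> (fst p = fst q \<and> snd q \<le> snd p)"

text \<open>Littlewood-Richardson tableaux of shape nu/kappa and content lam: semistandard
  fillings (entries \<ge> 1, rows weakly increasing, columns strictly increasing) with
  lam_k entries equal to k, whose reverse reading word is a lattice word.\<close>
definition LR_tableaux :: "nat list \<Rightarrow> nat list \<Rightarrow> nat list \<Rightarrow> ((nat \<times> nat) \<Rightarrow> nat) set" where
  "LR_tableaux nu kappa lam = {T.
     (\<forall>p. p \<notin> skew_cells nu kappa \<longrightarrow> T p = 0) \<and>
     (\<forall>p\<in>skew_cells nu kappa. 1 \<le> T p) \<and>
     (\<forall>i j. (i, j) \<in> skew_cells nu kappa \<and> (i, Suc j) \<in> skew_cells nu kappa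
            \<longrightarrow> T (i, j) \<le> T (i, Suc j)) \<and>
     (\<forall>i j. (i, j) \<in> skew_cells nu kappa \<and> (Suc i, j) \<in> skew_cells nu kappa
            \<longrightarrow> T (i, j) < T (Suc i, j)) \<and>
     (\<forall>k\<ge>1. card {p \<in> skew_cells nu kappa. T p = k} = part lam (k - 1)) \<and>
     (\<forall>q\<in>skew_cells nu kappa. \<forall>k\<ge>1.
        card {p \<in> skew_cells nu kappa. read_le p q \<and> T p = Suc k}
          \<le> card {p \<in> skew_cells nu kappa. read_le p q \<and> T p = k})}"

definition LR_coeff :: "nat list \<Rightarrow> nat list \<Rightarrow> nat list \<Rightarrow> nat" where
  "LR_coeff kappa lam nu =
     (if is_partition kappa \<and> is_partition lam \<and> is_partition nu \<and> subpart kappa nu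
      then card (LR_tableaux nu kappa lam) else 0)"

text \<open>Product sigma_kappa * sigma_lam in H^*(G(n,m)), given by its coordinates in the
  Schubert basis sigma_nu (nu \<subseteq> Box n m); the coordinate function is 0 off that basis.\<close>
definition schub_prod :: "nat \<Rightarrow> nat \<Rightarrow> nat list \<Rightarrow> nat list \<Rightarrow> nat list \<Rightarrow> nat" where
  "schub_prod n m kappa lam nu =
     (if is_partition nu \<and> subpart nu (box n m) then LR_coeff kappa lam nu else 0)"

text \<open>The Schubert class sigma_mu, as coordinate function in the Schubert basis.\<close>
definition schub_class :: "nat list \<Rightarrow> nat list \<Rightarrow> nat" where
  "schub_class mu nu = (if nu = mu then 1 else 0)"

end

theory Submission
  imports Defs "HOL-Library.Multiset"
begin

text \<open>By the Littlewood-Richardson rule \<open>\<sigma>\<^sub>\<kappa> \<sigma>\<^sub>\<lambda>\<close> has a term \<open>\<sigma>\<^sub>\<nu>\<close> only if there is an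
  LR tableau of shape \<open>\<nu>/\<kappa>\<close> and content \<open>\<lambda>\<close>; then \<open>|\<nu>| = |\<kappa>| + |\<lambda>|\<close>, and the lattice
  condition bounds every row length of \<open>\<nu>/\<kappa>\<close> by \<open>\<lambda>\<^sub>1 \<le> b\<close>. As \<open>\<kappa>\<close> has at most \<open>a\<close> rows,
  this confines \<open>\<nu>\<close> to \<open>\<box>\<^sub>c\<^sub>,\<^sub>d\<^sup>\<or>\<close>, the partition with \<open>a\<close> rows \<open>b + d\<close> and \<open>c\<close> rows \<open>b\<close>, whence (1).
  In the equality case \<open>\<nu> = \<box>\<^sub>c\<^sub>,\<^sub>d\<^sup>\<or>\<close> and the lattice condition determines the tableau:
  the top \<open>a\<close> rows are filled column by column with \<open>1, 2, \<dots>\<close>, and each of the \<open>c\<close> lower rows,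
  having exactly \<open>\<lambda>\<^sub>1\<close> cells, is forced by the rows above it. So the coefficient is \<open>1\<close>, and
  reading off the content gives \<open>\<kappa> = \<box>\<^sub>a\<^sub>,\<^sub>d + \<alpha>\<close> and \<open>\<lambda> = (\<box>\<^sub>c\<^sub>,\<^sub>b, \<alpha>\<^sup>\<or>)\<close>.\<close>

section \<open>Partitions as lists\<close>

lemma part_antimono:
  assumes "is_partition l" "i \<le> i'"
  shows "part l i' \<le> part l i"
proof (cases "i' < length l")
  case True
  have "sorted_wrt (\<ge>) l" using assms(1) by (simp add: is_partition_def)
  then show ?thesis using True assms(2)
    by (cases "i = i'") (auto simp: Defs.part_def sorted_wrt_iff_nth_less)
qed (simp add: Defs.part_def)

lemma part_pos: "is_partition l \<Longrightarrow> i < length l \<Longrightarrow> 0 < part l i"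
  by (auto simp: is_partition_def Defs.part_def)

lemma part_eq_0: "length l \<le> i \<Longrightarrow> part l i = 0"
  by (simp add: Defs.part_def)

lemma length_le_of_subpart:
  assumes "is_partition l" "subpart l mu"
  shows "length l \<le> length mu"
proof (rule ccontr)
  assume "\<not> ?thesis"
  then have "0 < part l (length mu)" using part_pos[OF assms(1)] by simp
  then show False using assms(2) by (auto simp: subpart_def part_eq_0 dest: spec[of _ "length mu"])
qed

lemma partition_eqI:
  assumes "is_partition x" "is_partition y" "\<And>i. part x i = part y i"
  shows "x = y"
proof -
  have "subpart x y" "subpart y x" using assms(3) by (simp_all add: subpart_def)
  then have len: "length x = length y"
    using length_le_of_subpart assms(1,2) le_antisym by blast
  show ?thesis
  proof (rule nth_equalityI[OF len])
    show "x ! i = y ! i" if "i < length x" for i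
      using that assms(3)[of i] len by (simp add: Defs.part_def)
  qed
qed

lemma part_map_upt: "part (map f [0..<M]) i = (if i < M then f i else 0)"
  by (simp add: Defs.part_def)

lemma sorted_wrt_ge_map_upt:
  "(\<And>i i'. i \<le> i' \<Longrightarrow> f i' \<le> (f i :: nat)) \<Longrightarrow> sorted_wrt (\<ge>) (map f [0..<M])"
  by (auto simp: sorted_wrt_iff_nth_less)

lemma filter_pos_eq_takeWhile:
  "sorted_wrt (\<ge>) (xs :: nat list) \<Longrightarrow> filter (\<lambda>x. 0 < x) xs = takeWhile (\<lambda>x. 0 < x) xs"
  by (induction xs) (auto simp: filter_empty_conv)

lemma part_filter_pos:
  assumes "sorted_wrt (\<ge>) (xs :: nat list)"
  shows "part (filter (\<lambda>x. 0 < x) xs) i = part xs i"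
proof -
  let ?t = "takeWhile (\<lambda>x. 0 < x) xs"
  show ?thesis
  proof (cases "i < length ?t")
    case True
    then show ?thesis
      using takeWhile_nth[OF True] less_le_trans[OF True length_takeWhile_le]
      by (simp add: filter_pos_eq_takeWhile[OF assms] Defs.part_def)
  next
    case outside: False
    show ?thesis
    proof (cases "i < length xs")
      case True
      have lt: "length ?t < length xs" using outside True by linarith
      have "xs ! i \<le> xs ! length ?t"
        using outside True assms by (cases "length ?t = i") (auto simp: sorted_wrt_iff_nth_less)
      then show ?thesis using nth_length_takeWhile[OF lt] outside True
        by (simp add: filter_pos_eq_takeWhile[OF assms] Defs.part_def)
    qed (use outside in \<open>auto simp: filter_pos_eq_takeWhile[OF assms] Defs.part_def\<close>)
  qed
qed

lemma is_partition_filter_pos: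
  "sorted_wrt (\<ge>) (xs :: nat list) \<Longrightarrow> is_partition (filter (\<lambda>x. 0 < x) xs)"
  by (simp add: is_partition_def sorted_wrt_filter)

lemma ex_partition_with_parts:
  fixes f :: "nat \<Rightarrow> nat"
  assumes "\<And>i i'. i \<le> i' \<Longrightarrow> f i' \<le> f i" "\<And>i. M \<le> i \<Longrightarrow> f i = 0"
  shows "\<exists>alpha. is_partition alpha \<and> (\<forall>i. part alpha i = f i)"
proof (intro exI conjI allI)
  have sorted: "sorted_wrt (\<ge>) (map f [0..<M])" by (rule sorted_wrt_ge_map_upt[OF assms(1)])
  show "is_partition (filter (\<lambda>x. 0 < x) (map f [0..<M]))"
    by (rule is_partition_filter_pos[OF sorted])
  show "part (filter (\<lambda>x. 0 < x) (map f [0..<M])) i = f i" for i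
    using assms(2)[of i] by (simp add: part_filter_pos[OF sorted] part_map_upt)
qed

lemma part_box: "part (box n m) i = (if i < n then m else 0)"
  by (cases "m = 0") (auto simp: box_def Defs.part_def filter_True)

lemma is_partition_box: "is_partition (box n m)"
  by (cases "m = 0") (auto simp: box_def is_partition_def filter_True sorted_wrt_iff_nth_less)

lemma part_padd: "part (padd x y) i = part x i + part y i"
  by (auto simp: padd_def Defs.part_def)

lemma is_partition_padd:
  assumes "is_partition x" "is_partition y"
  shows "is_partition (padd x y)"
proof -
  have "sorted_wrt (\<ge>) (padd x y)" unfolding padd_def
    by (rule sorted_wrt_ge_map_upt) (use part_antimono assms in \<open>simp add: add_mono\<close>)
  moreover have "0 < v" if "v \<in> set (padd x y)" for v
    using that part_pos[OF assms(1)] part_pos[OF assms(2)]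
    by (fastforce simp: padd_def max_def split: if_splits)
  ultimately show ?thesis by (simp add: is_partition_def)
qed

lemma sorted_pcompl_map:
  "is_partition alpha \<Longrightarrow> sorted_wrt (\<ge>) (map (\<lambda>i. b - part alpha (a - 1 - i)) [0..<a])"
  by (rule sorted_wrt_ge_map_upt) (simp add: diff_le_mono2 part_antimono)

lemma is_partition_pcompl: "is_partition alpha \<Longrightarrow> is_partition (pcompl a b alpha)"
  unfolding pcompl_def by (rule is_partition_filter_pos[OF sorted_pcompl_map])

lemma part_pcompl:
  assumes "is_partition alpha"
  shows "part (pcompl a b alpha) i = (if i < a then b - part alpha (a - 1 - i) else 0)"
  unfolding pcompl_def part_filter_pos[OF sorted_pcompl_map[OF assms]] by (rule part_map_upt)

lemma part_box_compl:
  "part (pcompl (a + c) (b + d) (box c d)) i = (if i < a then b + d else if i < a + c then b else 0)"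
  by (auto simp: part_pcompl is_partition_box part_box)

lemma is_partition_pconcat:
  assumes "is_partition mu" "is_partition nu"
  shows "is_partition (pconcat mu nu)"
  using assms by (auto simp: is_partition_def pconcat_def sorted_wrt_rev)

lemma part_pconcat_box:
  assumes "is_partition mu" "part mu 0 \<le> b"
  shows "part (pconcat (box c b) mu) m = (if m < c then b else part mu (m - c))"
proof (cases "b = 0")
  case True
  then have "mu = []" using assms part_pos[OF assms(1), of 0] by (cases mu) auto
  then show ?thesis using True by (simp add: box_def pconcat_def Defs.part_def)
next
  case False
  have bounded: "y \<le> b" if "y \<in> set mu" for y
  proof -
    obtain i where "i < length mu" "y = part mu i" using \<open>y \<in> set mu\<close> by (auto simp: in_set_conv_nth Defs.part_def)
    then show ?thesis using part_antimono[OF assms(1), of 0 i] assms(2) by simp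
  qed
  have "sorted_wrt (\<ge>) (replicate c b @ mu)"
    using assms(1) bounded unfolding sorted_wrt_append
    by (auto simp: is_partition_def sorted_wrt_iff_nth_less)
  then have "sort (replicate c b @ mu) = rev (replicate c b @ mu)"
    by (intro properties_for_sort) (simp_all add: sorted_wrt_rev del: rev_append)
  then have "pconcat (box c b) mu = replicate c b @ mu"
    using False by (simp add: pconcat_def box_def filter_True)
  then show ?thesis by (auto simp: Defs.part_def nth_append)
qed

lemma psize_eq_sum_part:
  assumes "length l \<le> L"
  shows "psize l = (\<Sum>i<L. part l i)"
proof -
  have "psize l = (\<Sum>i<length l. part l i)"
    by (simp add: psize_def sum_list_sum_nth Defs.part_def atLeast0LessThan)
  also have "\<dots> = (\<Sum>i<L. part l i)"
    by (rule sum.mono_neutral_left) (use assms in \<open>auto simp: part_eq_0\<close>)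
  finally show ?thesis .
qed

lemma psize_mono:
  assumes "is_partition x" "subpart x y"
  shows "psize x \<le> psize y"
  using assms by (simp add: psize_eq_sum_part[of x "length y"] psize_eq_sum_part[of y "length y"]
      length_le_of_subpart sum_mono subpart_def)

lemma eq_if_subpart_psize_le:
  assumes "is_partition x" "is_partition y" "subpart x y" "psize y \<le> psize x"
  shows "x = y"
proof (rule partition_eqI[OF assms(1,2)])
  let ?L = "length y"
  have le: "part x i \<le> part y i" for i using assms(3) by (simp add: subpart_def)
  fix i
  show "part x i = part y i"
  proof (rule ccontr)
    assume "part x i \<noteq> part y i"
    then have "part x i < part y i" using le[of i] by simp
    moreover from this have "i < ?L" by (metis not_le not_less0 part_eq_0)
    ultimately have "(\<Sum>i<?L. part x i) < (\<Sum>i<?L. part y i)"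
      by (intro sum_strict_mono_ex1) (auto intro: le)
    then show False
      using assms(4) psize_eq_sum_part[of y ?L] psize_eq_sum_part[of x ?L]
        length_le_of_subpart[OF assms(1,3)] by simp
  qed
qed

lemma psize_box_compl: "psize (pcompl (a + c) (b + d) (box c d)) = a * d + a * b + c * b"
proof -
  have "length (pcompl (a + c) (b + d) (box c d)) \<le> a + c"
    unfolding pcompl_def by (metis length_filter_le length_map length_upt minus_nat.diff_0)
  then have "psize (pcompl (a + c) (b + d) (box c d)) = (\<Sum>i<a + c. if i < a then b + d else b)"
    by (auto simp: psize_eq_sum_part part_box_compl intro: sum.cong)
  also have "\<dots> = a * d + a * b + c * b"
    by (induction c) (auto simp: algebra_simps)
  finally show ?thesis .
qed

section \<open>Littlewood-Richardson tableaux\<close>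

lemma mono_on_eq_if_card_superlevel_eq:
  fixes f g :: "nat \<Rightarrow> nat"
  assumes "mono_on {L..<U} f" "mono_on {L..<U} g"
    and "\<And>v. card {j\<in>{L..<U}. v \<le> f j} = card {j\<in>{L..<U}. v \<le> g j}"
    and "j \<in> {L..<U}"
  shows "f j = g j"
proof -
  have "g j \<le> f j"
    if f: "mono_on {L..<U} f" and g: "mono_on {L..<U} g"
      and counts: "\<And>v. card {j\<in>{L..<U}. v \<le> f j} = card {j\<in>{L..<U}. v \<le> g j}"
    for f g :: "nat \<Rightarrow> nat"
  proof (rule ccontr)
    assume "\<not> g j \<le> f j"
    then have "{j'\<in>{L..<U}. g j \<le> f j'} \<subseteq> {Suc j..<U}"
      using mono_onD[OF f] assms(4) by (force simp: not_less_eq_eq[symmetric])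
    then have "card {j'\<in>{L..<U}. g j \<le> f j'} \<le> card {Suc j..<U}"
      by (intro card_mono) auto
    also have "\<dots> < card {j..<U}"
      using assms(4) by (simp add: diff_less_mono2)
    also have "\<dots> \<le> card {j'\<in>{L..<U}. g j \<le> g j'}"
      using mono_onD[OF g] assms(4) by (intro card_mono) auto
    finally show False using counts[of "g j"] by simp
  qed
  from this[OF assms(1-3)] this[OF assms(2,1)] assms(3) show ?thesis by (simp add: le_antisym)
qed

locale LR_tableau =
  fixes nu kappa lam :: "nat list" and T :: "nat \<times> nat \<Rightarrow> nat"
  assumes partition_nu: "is_partition nu"
    and partition_kappa: "is_partition kappa"
    and partition_lam: "is_partition lam"
    and kappa_subpart_nu: "subpart kappa nu"
    and tableau: "T \<in> LR_tableaux nu kappa lam"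
begin

abbreviation cells where "cells \<equiv> skew_cells nu kappa"

definition count_in_row :: "nat \<Rightarrow> nat \<Rightarrow> nat" where
  "count_in_row i k = card {p\<in>cells. fst p = i \<and> T p = k}"

definition count_above :: "nat \<Rightarrow> nat \<Rightarrow> nat" where
  "count_above i k = card {p\<in>cells. fst p < i \<and> T p = k}"

definition count_ge_in_row :: "nat \<Rightarrow> nat \<Rightarrow> nat" where
  "count_ge_in_row i k = card {p\<in>cells. fst p = i \<and> k \<le> T p}"

lemma mem_cells: "(i, j) \<in> cells \<longleftrightarrow> part kappa i \<le> j \<and> j < part nu i"
  by (simp add: skew_cells_def)

lemma part_kappa_le_nu: "part kappa i \<le> part nu i"
  using kappa_subpart_nu by (simp add: subpart_def)

lemma finite_cells: "finite cells"
proof (rule finite_subset)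
  show "cells \<subseteq> {..<length nu} \<times> {..<part nu 0}"
    using part_antimono[OF partition_nu, of 0] by (force simp: skew_cells_def Defs.part_def split: if_splits)
qed simp

lemma finite_cells_filter [simp]: "finite {p\<in>cells. P p}"
  using finite_cells by simp

lemma T_outside: "p \<notin> cells \<Longrightarrow> T p = 0"
  using tableau unfolding LR_tableaux_def by blast

lemma T_ge_1: "p \<in> cells \<Longrightarrow> 1 \<le> T p"
  using tableau unfolding LR_tableaux_def by blast

lemma T_row_step: "(i, j) \<in> cells \<Longrightarrow> (i, Suc j) \<in> cells \<Longrightarrow> T (i, j) \<le> T (i, Suc j)"
  using tableau unfolding LR_tableaux_def by blast

lemma T_column_step: "(i, j) \<in> cells \<Longrightarrow> (Suc i, j) \<in> cells \<Longrightarrow> T (i, j) < T (Suc i, j)"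
  using tableau unfolding LR_tableaux_def by blast

lemma T_content: "1 \<le> k \<Longrightarrow> card {p\<in>cells. T p = k} = part lam (k - 1)"
  using tableau unfolding LR_tableaux_def by blast

lemma T_lattice:
  "q \<in> cells \<Longrightarrow> 1 \<le> k \<Longrightarrow>
    card {p\<in>cells. read_le p q \<and> T p = Suc k} \<le> card {p\<in>cells. read_le p q \<and> T p = k}"
  using tableau unfolding LR_tableaux_def by blast

lemma T_row_mono:
  assumes "(i, j) \<in> cells" "(i, j') \<in> cells" "j \<le> j'"
  shows "T (i, j) \<le> T (i, j')"
  using assms(3,2)
proof (induction j' rule: dec_induct)
  case (step n)
  then have "(i, n) \<in> cells" using assms(1) by (simp add: mem_cells)
  then show ?case using step T_row_step by (meson le_trans)
qed simp

lemma T_column_strict: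
  assumes "(i, j) \<in> cells" "(i', j) \<in> cells" "i \<le> i'"
  shows "T (i, j) + (i' - i) \<le> T (i', j)"
  using assms(3,2)
proof (induction i' rule: dec_induct)
  case (step n)
  have "part kappa n \<le> part kappa i" "part nu (Suc n) \<le> part nu n"
    using step.hyps(1) part_antimono partition_kappa partition_nu by auto
  then have "(n, j) \<in> cells" using assms(1) step.prems by (simp add: mem_cells)
  then show ?case using step T_column_step[of n j] by fastforce
qed simp

lemma T_le_length_lam: "p \<in> cells \<Longrightarrow> T p \<le> length lam"
proof (rule ccontr)
  assume p: "p \<in> cells" and "\<not> T p \<le> length lam"
  then have "card {q\<in>cells. T q = T p} = 0"
    using T_content[of "T p"] part_eq_0[of lam "T p - 1"] by simp
  then have "{q\<in>cells. T q = T p} = {}" by simp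
  then show False using p by blast
qed

lemma card_cells_shape: "card cells + psize kappa = psize nu"
proof -
  let ?L = "length nu"
  have "j < part nu i \<Longrightarrow> i < ?L" for i j
    by (cases "i < ?L") (auto simp: part_eq_0)
  then have cells_eq: "cells = Sigma {..<?L} (\<lambda>i. {part kappa i..<part nu i})"
    by (auto simp: skew_cells_def)
  have "card cells = (\<Sum>i<?L. part nu i - part kappa i)"
    unfolding cells_eq by (subst card_SigmaI) auto
  moreover have "psize kappa = (\<Sum>i<?L. part kappa i)"
    by (rule psize_eq_sum_part[OF length_le_of_subpart[OF partition_kappa kappa_subpart_nu]])
  moreover have "psize nu = (\<Sum>i<?L. part nu i)"
    by (rule psize_eq_sum_part) simp
  ultimately show ?thesis by (simp add: part_kappa_le_nu flip: sum.distrib)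
qed

lemma card_cells_content: "card cells = psize lam"
proof -
  have "cells = {p\<in>cells. 1 \<le> T p \<and> T p \<le> length lam}"
    using T_ge_1 T_le_length_lam by auto
  then have "card cells = card {p\<in>cells. 1 \<le> T p \<and> T p \<le> length lam}"
    by simp
  also have "card {p\<in>cells. 1 \<le> T p \<and> T p \<le> k} = (\<Sum>v<k. part lam v)" for k
  proof (induction k)
    case (Suc k)
    have "{p\<in>cells. 1 \<le> T p \<and> T p \<le> Suc k}
        = {p\<in>cells. 1 \<le> T p \<and> T p \<le> k} \<union> {p\<in>cells. T p = Suc k}"
      by auto
    then show ?case using Suc T_content[of "Suc k"] by (simp add: card_Un_disjoint disjoint_iff)
  qed simp
  finally show ?thesis using psize_eq_sum_part[of lam "length lam"] by simp
qed

lemma psize_shape: "psize nu = psize kappa + psize lam"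
  using card_cells_shape card_cells_content by simp

lemma count_above_0 [simp]: "count_above 0 k = 0"
  by (simp add: count_above_def)

lemma count_above_Suc: "count_above (Suc i) k = count_above i k + count_in_row i k"
proof -
  have "{p\<in>cells. fst p < Suc i \<and> T p = k}
      = {p\<in>cells. fst p < i \<and> T p = k} \<union> {p\<in>cells. fst p = i \<and> T p = k}"
    by auto
  then show ?thesis
    unfolding count_above_def count_in_row_def by (simp add: card_Un_disjoint disjoint_iff)
qed

lemma count_ge_in_row_Suc: "count_ge_in_row i k = count_in_row i k + count_ge_in_row i (Suc k)"
proof -
  have "{p\<in>cells. fst p = i \<and> k \<le> T p}
      = {p\<in>cells. fst p = i \<and> T p = k} \<union> {p\<in>cells. fst p = i \<and> Suc k \<le> T p}"
    by auto
  then show ?thesis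
    unfolding count_ge_in_row_def count_in_row_def by (simp add: card_Un_disjoint disjoint_iff)
qed

lemma count_ge_in_row_eq_card:
  "count_ge_in_row i k = card {j\<in>{part kappa i..<part nu i}. k \<le> T (i, j)}"
proof -
  have "{p\<in>cells. fst p = i \<and> k \<le> T p} = Pair i ` {j\<in>{part kappa i..<part nu i}. k \<le> T (i, j)}"
    by (auto simp: mem_cells)
  then show ?thesis unfolding count_ge_in_row_def by (simp add: card_image inj_on_def)
qed

lemma count_ge_in_row_le_1: "k \<le> 1 \<Longrightarrow> count_ge_in_row i k = part nu i - part kappa i"
proof -
  assume "k \<le> 1"
  then have "{j\<in>{part kappa i..<part nu i}. k \<le> T (i, j)} = {part kappa i..<part nu i}"
    using T_ge_1 by (force simp: mem_cells)
  then show ?thesis by (simp add: count_ge_in_row_eq_card)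
qed

lemma count_above_1_le: "count_above i 1 \<le> part lam 0"
proof -
  have "count_above i 1 \<le> card {p\<in>cells. T p = 1}"
    unfolding count_above_def by (rule card_mono) auto
  then show ?thesis using T_content[of 1] by simp
qed

text \<open>The lattice condition, read at the leftmost entry \<open>Suc k\<close> of row \<open>i\<close>: at that point
  all entries \<open>Suc k\<close> of row \<open>i\<close> have been read, but no entry \<open>k\<close> of row \<open>i\<close>.\<close>

lemma count_in_row_lattice:
  assumes k: "1 \<le> k" and nonempty: "0 < count_in_row i (Suc k)"
  shows "count_in_row i (Suc k) + count_above i (Suc k) \<le> count_above i k"
proof -
  let ?J = "{j. (i, j) \<in> cells \<and> T (i, j) = Suc k}"
  have "finite ?J"
    by (rule finite_subset[of _ "{..<part nu i}"]) (auto simp: mem_cells)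
  moreover have "?J \<noteq> {}"
    using nonempty unfolding count_in_row_def by (auto simp: card_gt_0_iff)
  ultimately obtain j0 where j0: "j0 \<in> ?J" and leftmost: "\<And>j. j \<in> ?J \<Longrightarrow> j0 \<le> j"
    using Min_in Min_le by blast
  let ?q = "(i, j0)"
  have q: "?q \<in> cells" using j0 by simp
  have "{p\<in>cells. read_le p ?q \<and> T p = Suc k}
      = {p\<in>cells. fst p < i \<and> T p = Suc k} \<union> {p\<in>cells. fst p = i \<and> T p = Suc k}"
    using leftmost by (auto simp: read_le_def)
  then have "card {p\<in>cells. read_le p ?q \<and> T p = Suc k} = count_above i (Suc k) + count_in_row i (Suc k)"
    unfolding count_above_def count_in_row_def by (simp add: card_Un_disjoint disjoint_iff)
  moreover have "{p\<in>cells. read_le p ?q \<and> T p = k} = {p\<in>cells. fst p < i \<and> T p = k}"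
    using T_row_mono[OF q] j0 by (fastforce simp: read_le_def)
  then have "card {p\<in>cells. read_le p ?q \<and> T p = k} = count_above i k"
    unfolding count_above_def by simp
  ultimately show ?thesis using T_lattice[OF q k] by simp
qed

lemma count_above_lattice:
  assumes "1 \<le> k"
  shows "count_in_row i (Suc k) + count_above i (Suc k) \<le> count_above i k"
proof (induction i)
  case 0
  show ?case using count_in_row_lattice[OF assms, of 0] by (cases "count_in_row 0 (Suc k) = 0") simp_all
next
  case (Suc i)
  show ?case
  proof (cases "count_in_row (Suc i) (Suc k) = 0")
    case True
    then show ?thesis using Suc.IH by (simp add: count_above_Suc)
  qed (simp add: count_in_row_lattice[OF assms])
qed

lemma count_ge_in_row_le_count_above:
  assumes "1 \<le> k"
  shows "count_ge_in_row i (Suc k) \<le> count_above i k"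
proof -
  have vanish: "count_ge_in_row i (Suc n) = 0" if "length lam \<le> n" for n
  proof -
    have "{p\<in>cells. fst p = i \<and> Suc n \<le> T p} = {}" using T_le_length_lam that by fastforce
    then show ?thesis by (simp add: count_ge_in_row_def)
  qed
  show ?thesis
  proof (cases "length lam \<le> k")
    case False
    then have "k \<le> length lam" by simp
    then show ?thesis
    proof (induction k rule: inc_induct)
      case (step n)
      then show ?case
        using count_ge_in_row_Suc[of i "Suc n"] count_above_lattice[of n i] assms by simp
    qed (simp add: vanish)
  qed (simp add: vanish)
qed

lemma row_length_le: "part nu i - part kappa i \<le> part lam 0"
proof -
  have "part nu i - part kappa i = count_in_row i 1 + count_ge_in_row i 2"
    using count_ge_in_row_le_1[of 1] count_ge_in_row_Suc[of i 1] by (simp add: numeral_2_eq_2)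
  also have "\<dots> \<le> count_in_row i 1 + count_above i 1"
    using count_ge_in_row_le_count_above[of 1 i] by (simp add: numeral_2_eq_2)
  also have "\<dots> = count_above (Suc i) 1" by (simp add: count_above_Suc)
  also have "\<dots> \<le> part lam 0" by (rule count_above_1_le)
  finally show ?thesis .
qed

text \<open>A row with \<open>\<lambda>\<^sub>1\<close> cells turns every inequality in the proof of \<open>row_length_le\<close> into an
  equality.\<close>

lemma
  assumes "part lam 0 \<le> part nu i - part kappa i"
  shows count_above_Suc_1_if_long_row: "count_above (Suc i) 1 = part lam 0"
    and count_ge_in_row_eq_if_long_row: "1 \<le> k \<Longrightarrow> count_ge_in_row i (Suc k) = count_above i k"
proof -
  have "part nu i - part kappa i = count_in_row i 1 + count_ge_in_row i 2"
    using count_ge_in_row_le_1[of 1] count_ge_in_row_Suc[of i 1] by (simp add: numeral_2_eq_2)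
  moreover have "count_ge_in_row i 2 \<le> count_above i 1"
    using count_ge_in_row_le_count_above[of 1 i] by (simp add: numeral_2_eq_2)
  moreover have "count_in_row i 1 + count_above i 1 \<le> part lam 0"
    using count_above_1_le[of "Suc i"] by (simp add: count_above_Suc)
  ultimately have first: "count_ge_in_row i 2 = count_above i 1"
    and "count_in_row i 1 + count_above i 1 = part lam 0"
    using assms by linarith+
  then show "count_above (Suc i) 1 = part lam 0" by (simp add: count_above_Suc)
  show "count_ge_in_row i (Suc k) = count_above i k" if "1 \<le> k"
    using that
  proof (induction k rule: dec_induct)
    case (step n)
    then show ?case
      using count_ge_in_row_Suc[of i "Suc n"] count_above_lattice[of n i]
        count_ge_in_row_le_count_above[of "Suc n" i] by simp
  qed (use first in \<open>simp add: numeral_2_eq_2\<close>)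
qed

lemma row_eq_if_count_ge_in_row_eq:
  assumes "LR_tableau nu kappa lam T'"
    and "\<And>v. count_ge_in_row i v = LR_tableau.count_ge_in_row nu kappa T' i v"
  shows "T (i, j) = T' (i, j)"
proof -
  interpret T': LR_tableau nu kappa lam T' by (rule assms(1))
  show ?thesis
  proof (cases "(i, j) \<in> cells")
    case True
    show ?thesis
    proof (rule mono_on_eq_if_card_superlevel_eq[where L = "part kappa i" and U = "part nu i"
          and f = "\<lambda>j. T (i, j)" and g = "\<lambda>j. T' (i, j)"])
      show "mono_on {part kappa i..<part nu i} (\<lambda>j. T (i, j))"
        "mono_on {part kappa i..<part nu i} (\<lambda>j. T' (i, j))"
        by (auto intro!: mono_onI T_row_mono T'.T_row_mono simp: mem_cells)
      show "card {j\<in>{part kappa i..<part nu i}. v \<le> T (i, j)}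
          = card {j\<in>{part kappa i..<part nu i}. v \<le> T' (i, j)}" for v
        using assms(2)[of v] by (simp add: count_ge_in_row_eq_card T'.count_ge_in_row_eq_card)
    qed (use True in \<open>simp add: mem_cells\<close>)
  qed (simp add: T_outside T'.T_outside)
qed

lemma long_row_eq_if_rows_above_eq:
  assumes "LR_tableau nu kappa lam T'" "part lam 0 \<le> part nu i - part kappa i"
    and "\<And>i' j'. i' < i \<Longrightarrow> T (i', j') = T' (i', j')"
  shows "T (i, j) = T' (i, j)"
proof -
  interpret T': LR_tableau nu kappa lam T' by (rule assms(1))
  have same_above: "count_above i v = T'.count_above i v" for v
  proof -
    have "{p\<in>cells. fst p < i \<and> T p = v} = {p\<in>cells. fst p < i \<and> T' p = v}"
      by (intro Collect_cong) (metis assms(3) prod.collapse)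
    then show ?thesis unfolding count_above_def T'.count_above_def by simp
  qed
  have "count_ge_in_row i v = T'.count_ge_in_row i v" for v
  proof (cases "v \<le> 1")
    case False
    then obtain k where "v = Suc k" "1 \<le> k" by (cases v) auto
    then show ?thesis
      using count_ge_in_row_eq_if_long_row[OF assms(2)] T'.count_ge_in_row_eq_if_long_row[OF assms(2)]
        same_above by simp
  qed (simp add: count_ge_in_row_le_1 T'.count_ge_in_row_le_1)
  then show ?thesis by (rule row_eq_if_count_ge_in_row_eq[OF assms(1)])
qed

end

section \<open>Tableaux of shape \<open>\<box>\<^sub>c\<^sub>,\<^sub>d\<^sup>\<or>/\<kappa>\<close>\<close>

locale LR_tableau_box_compl = LR_tableau +
  fixes a b c d :: nat
  assumes shape: "nu = pcompl (a + c) (b + d) (box c d)"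
    and length_kappa: "length kappa \<le> a"
    and lam_1: "part lam 0 \<le> b"
begin

lemma part_nu: "part nu i = (if i < a then b + d else if i < a + c then b else 0)"
  by (simp add: shape part_box_compl)

lemma part_kappa_eq_0: "a \<le> i \<Longrightarrow> part kappa i = 0"
  using length_kappa by (simp add: part_eq_0)

lemma part_kappa_bounds: "i < a \<Longrightarrow> d \<le> part kappa i \<and> part kappa i \<le> b + d"
  using row_length_le[of i] lam_1 part_kappa_le_nu[of i] part_nu[of i] by simp

lemma long_bottom_row: "a \<le> i \<Longrightarrow> i < a + c \<Longrightarrow> part lam 0 \<le> part nu i - part kappa i"
  using lam_1 part_nu part_kappa_eq_0 by simp

definition top_row :: "nat \<Rightarrow> nat" where
  "top_row j = (LEAST s. part kappa s \<le> j)"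

lemma top_row_le_iff: "top_row j \<le> s \<longleftrightarrow> part kappa s \<le> j"
proof -
  have "part kappa (length kappa) \<le> j" by (simp add: part_eq_0)
  then have "part kappa (top_row j) \<le> j"
    unfolding top_row_def by (rule LeastI)
  then show ?thesis
    using part_antimono[OF partition_kappa] unfolding top_row_def by (meson Least_le le_trans)
qed

lemma mem_cells_top: "i < a \<Longrightarrow> (i, j) \<in> cells \<longleftrightarrow> top_row j \<le> i \<and> j < b + d"
  by (simp add: mem_cells top_row_le_iff part_nu)

lemma T_top_lower:
  assumes "i < a" "(i, j) \<in> cells"
  shows "i - top_row j + 1 \<le> T (i, j)"
proof -
  have "top_row j \<le> i" "(top_row j, j) \<in> cells"
    using assms mem_cells_top by auto
  then show ?thesis using T_column_strict[of "top_row j" j i] T_ge_1 assms(2) by fastforce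
qed

lemma count_above_top:
  assumes filled: "\<And>i' j'. i' < i \<Longrightarrow> (i', j') \<in> cells \<Longrightarrow> T (i', j') = i' - top_row j' + 1"
    and "i \<le> a" "1 \<le> v"
  shows "count_above i v = card {j. j < b + d \<and> top_row j + v \<le> i}"
proof -
  let ?J = "{j. j < b + d \<and> top_row j + v \<le> i}"
  have "{p\<in>cells. fst p < i \<and> T p = v} = (\<lambda>j. (top_row j + v - 1, j)) ` ?J"
  proof (rule set_eqI)
    fix p :: "nat \<times> nat"
    obtain i' j where p: "p = (i', j)" by fastforce
    show "p \<in> {p\<in>cells. fst p < i \<and> T p = v} \<longleftrightarrow> p \<in> (\<lambda>j. (top_row j + v - 1, j)) ` ?J"
    proof
      assume "p \<in> {p\<in>cells. fst p < i \<and> T p = v}"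
      then show "p \<in> (\<lambda>j. (top_row j + v - 1, j)) ` ?J"
        using filled[of i' j] mem_cells_top[of i' j] assms(2) p by force
    next
      assume "p \<in> (\<lambda>j. (top_row j + v - 1, j)) ` ?J"
      then have "i' = top_row j + v - 1" "j < b + d" "top_row j + v \<le> i" using p by auto
      then show "p \<in> {p\<in>cells. fst p < i \<and> T p = v}"
        using filled[of i' j] mem_cells_top[of i' j] assms(2,3) p by auto
    qed
  qed
  then show ?thesis unfolding count_above_def by (simp add: card_image inj_on_def)
qed

text \<open>The top \<open>a\<close> rows have full length \<open>b + d\<close>; there the lattice condition forces every
  column to be filled with \<open>1, 2, 3, \<dots>\<close> from its top cell downwards.\<close>

lemma T_top: "i < a \<Longrightarrow> (i, j) \<in> cells \<Longrightarrow> T (i, j) = i - top_row j + 1"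
proof (induction i arbitrary: j rule: less_induct)
  case (less i)
  show ?case
  proof (rule ccontr)
    assume "T (i, j) \<noteq> i - top_row j + 1"
    define v where "v = i - top_row j + 1"
    have v: "1 \<le> v" "Suc v \<le> T (i, j)"
      using T_top_lower[OF less.prems] \<open>T (i, j) \<noteq> i - top_row j + 1\<close> unfolding v_def by auto
    let ?J = "{j'. j' < b + d \<and> top_row j' + v \<le> i}"
    have "Pair i ` ?J \<subseteq> {p\<in>cells. fst p = i \<and> Suc v \<le> T p}"
    proof (rule image_subsetI)
      fix j' assume j': "j' \<in> ?J"
      then have "(i, j') \<in> cells" using mem_cells_top[OF less.prems(1)] by simp
      then show "(i, j') \<in> {p\<in>cells. fst p = i \<and> Suc v \<le> T p}"
        using T_top_lower[OF less.prems(1), of j'] j' by auto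
    qed
    moreover have "(i, j) \<in> {p\<in>cells. fst p = i \<and> Suc v \<le> T p} - Pair i ` ?J"
      using less.prems v(2) unfolding v_def by auto
    ultimately have "card (Pair i ` ?J) < count_ge_in_row i (Suc v)"
      unfolding count_ge_in_row_def by (intro psubset_card_mono) auto
    moreover have "count_above i v = card ?J"
      by (rule count_above_top) (use less v in auto)
    ultimately show False
      using count_ge_in_row_le_count_above[OF v(1), of i] by (simp add: card_image inj_on_def)
  qed
qed

lemma count_above_a: "1 \<le> k \<Longrightarrow> count_above a k = (if k \<le> a then b + d - part kappa (a - k) else 0)"
proof -
  assume k: "1 \<le> k"
  have "count_above a k = card {j. j < b + d \<and> top_row j + k \<le> a}"
    by (rule count_above_top[OF T_top _ k]) auto
  also have "{j. j < b + d \<and> top_row j + k \<le> a} = (if k \<le> a then {part kappa (a - k)..<b + d} else {})"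
    by (auto simp flip: top_row_le_iff)
  finally show ?thesis by simp
qed

lemma count_above_bottom:
  "s \<le> c \<Longrightarrow> 1 \<le> k \<Longrightarrow> count_above (a + s) k = (if k \<le> s then b else count_above a (k - s))"
proof (induction s arbitrary: k)
  case (Suc s)
  then have long: "part lam 0 \<le> part nu (a + s) - part kappa (a + s)"
    by (intro long_bottom_row) auto
  show ?case
  proof (cases "k = 1")
    case True
    then show ?thesis
      using count_above_Suc_1_if_long_row[OF long] long_bottom_row[of "a + s"] row_length_le[of "a + s"]
        part_nu part_kappa_eq_0 Suc.prems by simp
  next
    case False
    then obtain k' where k': "k = Suc k'" "1 \<le> k'" using Suc.prems by (cases k) auto
    have "count_above (Suc (a + s)) (Suc k') = count_above (a + s) k'"
      using count_ge_in_row_eq_if_long_row[OF long k'(2)] count_ge_in_row_eq_if_long_row[OF long, of "Suc k'"]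
        count_ge_in_row_Suc[of "a + s" "Suc k'"] count_above_Suc[of "a + s" "Suc k'"] k' by simp
    then show ?thesis using Suc k' by simp
  qed
qed simp

lemma part_lam:
  "part lam m = (if m < c then b else if m < a + c then b + d - part kappa (a + c - 1 - m) else 0)"
proof -
  have "fst p < a + c" if "p \<in> cells" for p
    using that part_nu[of "fst p"] by (cases p) (auto simp: mem_cells split: if_splits)
  then have "{p\<in>cells. T p = Suc m} = {p\<in>cells. fst p < a + c \<and> T p = Suc m}"
    by blast
  then have "part lam m = count_above (a + c) (Suc m)"
    using T_content[of "Suc m"] unfolding count_above_def by simp
  also have "\<dots> = (if m < c then b else count_above a (Suc m - c))"
    using count_above_bottom[of c "Suc m"] by simp
  also have "\<dots> = (if m < c then b else if m < a + c then b + d - part kappa (a + c - 1 - m) else 0)"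
    using count_above_a[of "Suc m - c"] by (auto simp: Suc_diff_le)
  finally show ?thesis .
qed

lemma T_unique:
  assumes "T' \<in> LR_tableaux nu kappa lam"
  shows "T' = T"
proof -
  interpret T': LR_tableau_box_compl nu kappa lam T' a b c d
    using assms shape length_kappa lam_1 partition_nu partition_kappa partition_lam kappa_subpart_nu
    by unfold_locales
  have "\<forall>j. T (i, j) = T' (i, j)" for i
  proof (induction i rule: less_induct)
    case (less i)
    show ?case
    proof
      fix j
      consider "i < a" | "a \<le> i" "i < a + c" | "a + c \<le> i" by linarith
      then show "T (i, j) = T' (i, j)"
      proof cases
        case 1
        then show ?thesis
          by (cases "(i, j) \<in> cells") (simp_all add: T_top T'.T_top T_outside T'.T_outside)
      next
        case 2
        then show ?thesis
          using long_row_eq_if_rows_above_eq[OF T'.LR_tableau_axioms long_bottom_row] less by blast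
      next
        case 3
        then have "(i, j) \<notin> cells" by (simp add: mem_cells part_nu)
        then show ?thesis by (simp add: T_outside T'.T_outside)
      qed
    qed
  qed
  then show ?thesis by (auto simp: fun_eq_iff)
qed

lemma LR_tableaux_eq: "LR_tableaux nu kappa lam = {T}"
  using T_unique tableau by blast

lemma kappa_lam_decomposition:
  "\<exists>alpha. is_partition alpha \<and> subpart alpha (box a b) \<and>
     kappa = padd (box a d) alpha \<and> lam = pconcat (box c b) (pcompl a b alpha)"
proof -
  obtain alpha where alpha: "is_partition alpha"
    and part_alpha: "\<And>i. part alpha i = (if i < a then part kappa i - d else 0)"
    using ex_partition_with_parts[of "\<lambda>i. if i < a then part kappa i - d else 0" a]
      part_antimono[OF partition_kappa] by (force simp: diff_le_mono)
  have "subpart alpha (box a b)"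
    using part_kappa_bounds by (fastforce simp: subpart_def part_alpha part_box)
  moreover have "kappa = padd (box a d) alpha"
    by (rule partition_eqI[OF partition_kappa is_partition_padd[OF is_partition_box alpha]])
      (use part_kappa_bounds part_kappa_eq_0 in \<open>simp add: part_padd part_box part_alpha\<close>)
  moreover have "lam = pconcat (box c b) (pcompl a b alpha)"
  proof (rule partition_eqI[OF partition_lam is_partition_pconcat[OF is_partition_box is_partition_pcompl[OF alpha]]])
    fix m
    have "part (pcompl a b alpha) 0 \<le> b" by (simp add: part_pcompl[OF alpha])
    then show "part lam m = part (pconcat (box c b) (pcompl a b alpha)) m"
      using part_kappa_bounds[of "a + c - 1 - m"]
      by (auto simp: part_lam part_pconcat_box is_partition_pcompl alpha part_pcompl[OF alpha] part_alpha)
  qed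
  ultimately show ?thesis using alpha by blast
qed

end

section \<open>Products of Schubert classes\<close>

lemma (in LR_tableau) subpart_box_compl:
  assumes "subpart nu (box (a + c) (b + d))" "length kappa \<le> a" "part lam 0 \<le> b"
  shows "subpart nu (pcompl (a + c) (b + d) (box c d))"
  unfolding subpart_def part_box_compl
proof
  fix i
  have "part nu i \<le> (if i < a + c then b + d else 0)"
    using assms(1) by (simp add: subpart_def part_box)
  moreover have "a \<le> i \<Longrightarrow> part nu i \<le> b"
    using row_length_le[of i] assms(2,3) part_eq_0[of kappa i] by simp
  ultimately show "part nu i \<le> (if i < a then b + d else if i < a + c then b else 0)"
    by (auto split: if_splits)
qed

lemma schub_prod_nonzero:
  assumes "is_partition kappa" "is_partition lam" "schub_prod n m kappa lam nu \<noteq> 0"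
  shows "schub_prod n m kappa lam nu = card (LR_tableaux nu kappa lam)"
    and "subpart nu (box n m)"
    and "\<exists>T. LR_tableau nu kappa lam T"
proof -
  have nu: "is_partition nu" "subpart nu (box n m)" "subpart kappa nu"
    using assms(3) by (auto simp: schub_prod_def LR_coeff_def split: if_splits)
  show card_eq: "schub_prod n m kappa lam nu = card (LR_tableaux nu kappa lam)"
    using nu assms(1,2) by (simp add: schub_prod_def LR_coeff_def)
  show "subpart nu (box n m)" by (fact nu(2))
  have "LR_tableaux nu kappa lam \<noteq> {}" using card_eq assms(3) by auto
  then show "\<exists>T. LR_tableau nu kappa lam T" using nu assms(1,2) by (auto simp: LR_tableau_def)
qed

lemma schub_prod_nonzero_tableau:
  assumes "is_partition kappa" "is_partition lam" "length kappa \<le> a" "part lam 0 \<le> b"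
    and "schub_prod (a + c) (b + d) kappa lam nu \<noteq> 0"
  obtains T where "LR_tableau nu kappa lam T" "subpart nu (pcompl (a + c) (b + d) (box c d))"
  using schub_prod_nonzero[OF assms(1,2,5)] LR_tableau.subpart_box_compl assms(3,4) by metis

lemma schub_prod_vanishes_if_large:
  assumes "is_partition kappa" "is_partition lam" "length kappa \<le> a" "part lam 0 \<le> b"
    and "psize kappa + psize lam > a * d + a * b + c * b"
  shows "schub_prod (a + c) (b + d) kappa lam nu = 0"
proof (rule ccontr)
  assume "schub_prod (a + c) (b + d) kappa lam nu \<noteq> 0"
  then obtain T where "LR_tableau nu kappa lam T" "subpart nu (pcompl (a + c) (b + d) (box c d))"
    using schub_prod_nonzero_tableau assms(1-4) by blast
  then have "psize kappa + psize lam \<le> a * d + a * b + c * b"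
    using LR_tableau.psize_shape LR_tableau.partition_nu psize_mono psize_box_compl by metis
  then show False using assms(5) by simp
qed

lemma schub_prod_eq_box_compl:
  assumes "is_partition kappa" "is_partition lam" "length kappa \<le> a" "part lam 0 \<le> b"
    and "psize kappa + psize lam = a * d + a * b + c * b"
    and "schub_prod (a + c) (b + d) kappa lam nu \<noteq> 0"
  shows "nu = pcompl (a + c) (b + d) (box c d)"
    and "\<exists>T. LR_tableau_box_compl nu kappa lam T a b c d"
proof -
  obtain T where T: "LR_tableau nu kappa lam T" and sub: "subpart nu (pcompl (a + c) (b + d) (box c d))"
    using schub_prod_nonzero_tableau assms(1-4,6) by blast
  show nu: "nu = pcompl (a + c) (b + d) (box c d)"
    using eq_if_subpart_psize_le[OF LR_tableau.partition_nu[OF T] is_partition_pcompl[OF is_partition_box] sub]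
      LR_tableau.psize_shape[OF T] psize_box_compl assms(5) by simp
  show "\<exists>T. LR_tableau_box_compl nu kappa lam T a b c d"
    using T nu assms(3,4) by (auto simp: LR_tableau_box_compl_def LR_tableau_box_compl_axioms_def)
qed

lemma schub_prod_eq_schub_class_box_compl:
  assumes "is_partition kappa" "is_partition lam" "length kappa \<le> a" "part lam 0 \<le> b"
    and "psize kappa + psize lam = a * d + a * b + c * b"
    and "schub_prod (a + c) (b + d) kappa lam \<noteq> (\<lambda>_. 0)"
  shows "schub_prod (a + c) (b + d) kappa lam = schub_class (pcompl (a + c) (b + d) (box c d))"
proof
  let ?nu = "pcompl (a + c) (b + d) (box c d)"
  obtain nu where "schub_prod (a + c) (b + d) kappa lam nu \<noteq> 0" using assms(6) by auto
  then have nonzero: "schub_prod (a + c) (b + d) kappa lam ?nu \<noteq> 0"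
    using schub_prod_eq_box_compl(1)[OF assms(1-5)] by metis
  then obtain T where "LR_tableau_box_compl ?nu kappa lam T a b c d"
    using schub_prod_eq_box_compl(2)[OF assms(1-5)] by blast
  then have one: "schub_prod (a + c) (b + d) kappa lam ?nu = 1"
    using schub_prod_nonzero(1)[OF assms(1,2) nonzero] LR_tableau_box_compl.LR_tableaux_eq by fastforce
  show "schub_prod (a + c) (b + d) kappa lam nu' = schub_class ?nu nu'" for nu'
  proof (cases "nu' = ?nu")
    case False
    then have "schub_prod (a + c) (b + d) kappa lam nu' = 0"
      using schub_prod_eq_box_compl(1)[OF assms(1-5), of nu'] by blast
    then show ?thesis using False by (simp add: schub_class_def)
  qed (simp add: one schub_class_def)
qed

theorem lemma2p3:
  fixes a b c d :: nat and kappa lam :: "nat list"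
  assumes "is_partition kappa" and "is_partition lam"
    and "subpart kappa (box (a + c) (b + d))" and "subpart lam (box (a + c) (b + d))"
    and "length kappa \<le> a" and "part lam 0 \<le> b"
  shows "(psize kappa + psize lam > a * d + a * b + c * b \<longrightarrow>
            schub_prod (a + c) (b + d) kappa lam = (\<lambda>_. 0))
       \<and> (psize kappa + psize lam = a * d + a * b + c * b \<and>
            schub_prod (a + c) (b + d) kappa lam \<noteq> (\<lambda>_. 0) \<longrightarrow>
            schub_prod (a + c) (b + d) kappa lam
              = schub_class (pcompl (a + c) (b + d) (box c d))
            \<and> (\<exists>alpha. is_partition alpha \<and> subpart alpha (box a b) \<and>
                 kappa = padd (box a d) alpha \<and>
                 lam = pconcat (box c b) (pcompl a b alpha)))"
  \<comment> \<open>\<open>\<kappa>, \<lambda> \<subseteq> \<box>\<^sub>a\<^sub>+\<^sub>c\<^sub>,\<^sub>b\<^sub>+\<^sub>d\<close> only make \<open>\<sigma>\<^sub>\<kappa>, \<sigma>\<^sub>\<lambda>\<close> Schubert classes; the proof does not use them.\<close>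
proof (intro conjI impI)
  show "schub_prod (a + c) (b + d) kappa lam = (\<lambda>_. 0)"
    if "psize kappa + psize lam > a * d + a * b + c * b"
    using schub_prod_vanishes_if_large[OF assms(1,2,5,6) that] by blast
next
  assume size: "psize kappa + psize lam = a * d + a * b + c * b \<and>
    schub_prod (a + c) (b + d) kappa lam \<noteq> (\<lambda>_. 0)"
  then show "schub_prod (a + c) (b + d) kappa lam = schub_class (pcompl (a + c) (b + d) (box c d))"
    using schub_prod_eq_schub_class_box_compl[OF assms(1,2,5,6)] by blast
  from size obtain nu T where "LR_tableau_box_compl nu kappa lam T a b c d"
    using schub_prod_eq_box_compl(2)[OF assms(1,2,5,6)] by (metis (full_types))
  then show "\<exists>alpha. is_partition alpha \<and> subpart alpha (box a b) \<and>
      kappa = padd (box a d) alpha \<and> lam = pconcat (box c b) (pcompl a b alpha)"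
    by (rule LR_tableau_box_compl.kappa_lam_decomposition)
qed

end
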